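(* Let $k\ge2$ be an integer and $\lambda>0$. If the median of the Poisson distribution of order $k$ with parameter $\lambda$ is $0$, then its mode is also $0$ (and $0$ is the unique mode).
   Context: For an integer $k\ge1$ and a real $\lambda>0$, the Poisson distribution of order $k$ with parameter $\lambda$ is the distribution on $\{0,1,2,\dots\}$ with probability mass function $$f_k(n;\lambda)=e^{-k\lambda}\sum_{\substack{n_1,\dots,n_k\ge 0\\ n_1+2n_2+\dots+kn_k=n}}\frac{\lambda^{n_1+\dots+n_k}}{n_1!\cdots n_k!},\qquad n=0,1,2,\dots$$ If $Y$ is a random variable with this distribution, the median is defined as the smallest integer $\nu$ such that $P(Y\le\nu)\ge\frac12$. A mode is any $n$ at which $f_k(n;\lambda)$ attains its global maximum over $n\ge0$. *)

theory Defs
  imports Complex_Main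
begin

definition poisk_tuples :: "nat \<Rightarrow> nat \<Rightarrow> (nat \<Rightarrow> nat) set" where
  "poisk_tuples k n = {m. (\<forall>i. i \<notin> {1..k} \<longrightarrow> m i = 0) \<and> (\<Sum>i=1..k. i * m i) = n}"

definition poisk_pmf :: "nat \<Rightarrow> real \<Rightarrow> nat \<Rightarrow> real" where
  "poisk_pmf k lam n = exp (- real k * lam) *
     (\<Sum>m\<in>poisk_tuples k n. lam ^ (\<Sum>i=1..k. m i) / (\<Prod>i=1..k. fact (m i)))"

definition poisk_cdf :: "nat \<Rightarrow> real \<Rightarrow> nat \<Rightarrow> real" where
  "poisk_cdf k lam n = (\<Sum>j\<le>n. poisk_pmf k lam j)"

definition poisk_median :: "nat \<Rightarrow> real \<Rightarrow> nat" where
  "poisk_median k lam = (LEAST \<nu>. poisk_cdf k lam \<nu> \<ge> 1/2)"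

definition poisk_is_mode :: "nat \<Rightarrow> real \<Rightarrow> nat \<Rightarrow> bool" where
  "poisk_is_mode k lam n \<longleftrightarrow> (\<forall>j. poisk_pmf k lam j \<le> poisk_pmf k lam n)"

end

theory Submission
  imports Defs "HOL-Library.FuncSet"
begin

text \<open>Median 0 means f(0) \<ge> 1/2. All f(n) are positive (take n_1 = n) and the total mass is
  at most 1, so for n \<ge> 1 we get f(n) \<le> 1 - f(0) - f(n+1) < 1/2 \<le> f(0).
  Mass bounds come from comparing the tuples of index at most N with boxes of tuples
  with bounded entries: over a box the sum of the weights \<lambda>^(n_1+...+n_k) / (n_1!...n_k!)
  factorises into the k-th power of a partial sum of the exponential series. Hence the
  distribution function is at most 1 and exceeds 1/2 eventually, so the median is attained.\<close>

text \<open>Like \<open>PiE\<close>, but with value 0 instead of \<open>undefined\<close> outside the index set, as in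
  the encoding of \<open>poisk_tuples\<close>.\<close>
definition Pi_zero :: "'a set \<Rightarrow> ('a \<Rightarrow> 'b set) \<Rightarrow> ('a \<Rightarrow> 'b::zero) set" where
  "Pi_zero I B = {m. (\<forall>i\<in>I. m i \<in> B i) \<and> (\<forall>i. i \<notin> I \<longrightarrow> m i = 0)}"

lemma bij_betw_restrict_Pi_zero: "bij_betw (\<lambda>m. restrict m I) (Pi_zero I B) (PiE I B)"
  by (rule bij_betw_byWitness[where f' = "\<lambda>g i. if i \<in> I then g i else 0"])
     (auto simp: Pi_zero_def PiE_def extensional_def fun_eq_iff)

lemma finite_Pi_zero:
  assumes "finite I" "\<And>i. i \<in> I \<Longrightarrow> finite (B i)"
  shows "finite (Pi_zero I B)"
  using bij_betw_finite[OF bij_betw_restrict_Pi_zero, of I B] finite_PiE[OF assms] by simp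

lemma sum_prod_Pi_zero:
  fixes f :: "'a \<Rightarrow> 'b::zero \<Rightarrow> 'c::comm_semiring_1"
  assumes "finite I" "\<And>i. i \<in> I \<Longrightarrow> finite (B i)"
  shows "(\<Sum>m\<in>Pi_zero I B. \<Prod>i\<in>I. f i (m i)) = (\<Prod>i\<in>I. \<Sum>y\<in>B i. f i y)"
proof -
  have "(\<Sum>m\<in>Pi_zero I B. \<Prod>i\<in>I. f i (m i)) = (\<Sum>g\<in>PiE I B. \<Prod>i\<in>I. f i (g i))"
    using sum.reindex_bij_betw[OF bij_betw_restrict_Pi_zero, of "\<lambda>g. \<Prod>i\<in>I. f i (g i)" I B]
    by simp
  also have "\<dots> = (\<Prod>i\<in>I. \<Sum>y\<in>B i. f i y)"
    by (rule prod_sum_PiE[symmetric]) (use assms in auto)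
  finally show ?thesis .
qed

lemma exp_series_sums: "(\<lambda>j. x ^ j / fact j) sums exp (x::real)"
  using exp_converges[of x] by (simp add: divide_inverse mult.commute)

lemma sum_exp_series_le_exp:
  assumes "finite A" "x \<ge> 0"
  shows "(\<Sum>j\<in>A. x ^ j / fact j) \<le> exp (x::real)"
  using sum_le_suminf[OF sums_summable[OF exp_series_sums] assms(1)] sums_unique[OF exp_series_sums]
    assms(2) by simp

lemma less_first_if_first_ge_half:
  fixes p :: "nat \<Rightarrow> real"
  assumes pos: "\<And>n. p n > 0" and mass: "\<And>N. (\<Sum>j\<le>N. p j) \<le> 1"
    and "p 0 \<ge> 1/2" and "n > 0"
  shows "p n < p 0"
proof -
  have "p 0 + p n + p (Suc n) = (\<Sum>j\<in>{0, n, Suc n}. p j)"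
    using \<open>n > 0\<close> by simp
  also have "\<dots> \<le> (\<Sum>j\<le>Suc n. p j)"
    by (rule sum_mono2) (auto intro: less_imp_le pos)
  also have "\<dots> \<le> 1" by (rule mass)
  finally show ?thesis
    using pos[of "Suc n"] \<open>p 0 \<ge> 1/2\<close> by linarith
qed

definition poisk_weight :: "nat \<Rightarrow> real \<Rightarrow> (nat \<Rightarrow> nat) \<Rightarrow> real" where
  "poisk_weight k lam m = (\<Prod>i=1..k. lam ^ m i / fact (m i))"

lemma poisk_pmf_eq_sum_weight:
  "poisk_pmf k lam n = exp (- real k * lam) * (\<Sum>m\<in>poisk_tuples k n. poisk_weight k lam m)"
  by (simp add: poisk_pmf_def poisk_weight_def power_sum prod_dividef)

lemma poisk_weight_pos: "lam > 0 \<Longrightarrow> poisk_weight k lam m > 0"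
  unfolding poisk_weight_def by (intro prod_pos) auto

lemma poisk_weight_nonneg: "lam \<ge> 0 \<Longrightarrow> poisk_weight k lam m \<ge> 0"
  unfolding poisk_weight_def by (intro prod_nonneg) auto

lemma sum_poisk_weight_Pi_zero:
  assumes "finite A"
  shows "(\<Sum>m\<in>Pi_zero {1..k} (\<lambda>_. A). poisk_weight k lam m) = (\<Sum>j\<in>A. lam ^ j / fact j) ^ k"
  unfolding poisk_weight_def by (subst sum_prod_Pi_zero) (use assms in auto)

lemma poisk_tuples_subset_Pi_zero:
  assumes "n \<le> N"
  shows "poisk_tuples k n \<subseteq> Pi_zero {1..k} (\<lambda>_. {..N})"
proof
  fix m assume m: "m \<in> poisk_tuples k n"
  have "m i \<le> N" if "i \<in> {1..k}" for i
  proof -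
    have "m i \<le> i * m i" using that by simp
    also have "\<dots> \<le> (\<Sum>i=1..k. i * m i)" by (rule member_le_sum[OF that]) auto
    finally show ?thesis using m assms by (simp add: poisk_tuples_def)
  qed
  then show "m \<in> Pi_zero {1..k} (\<lambda>_. {..N})"
    using m by (simp add: Pi_zero_def poisk_tuples_def)
qed

lemma finite_poisk_tuples: "finite (poisk_tuples k n)"
  using finite_subset[OF poisk_tuples_subset_Pi_zero[OF order_refl] finite_Pi_zero] by auto

lemma Pi_zero_subset_poisk_tuples:
  "Pi_zero {1..k} (\<lambda>_. {..<M}) \<subseteq> (\<Union>n\<le>k*k*M. poisk_tuples k n)"
proof
  fix m assume m: "m \<in> Pi_zero {1..k} (\<lambda>_. {..<M})"
  let ?n = "\<Sum>i=1..k. i * m i"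
  have "?n \<le> (\<Sum>i=1..k. k * M)"
    using m by (intro sum_mono mult_le_mono) (auto simp: Pi_zero_def less_imp_le)
  then have "?n \<le> k*k*M" by simp
  moreover have "m \<in> poisk_tuples k ?n"
    using m by (simp add: Pi_zero_def poisk_tuples_def)
  ultimately show "m \<in> (\<Union>n\<le>k*k*M. poisk_tuples k n)" by blast
qed

lemma poisk_cdf_eq_sum_weight:
  "poisk_cdf k lam N = exp (- real k * lam) * (\<Sum>m\<in>(\<Union>n\<le>N. poisk_tuples k n). poisk_weight k lam m)"
proof -
  have "poisk_tuples k n \<inter> poisk_tuples k n' = {}" if "n \<noteq> n'" for n n'
    using that by (auto simp: poisk_tuples_def)
  then have "(\<Sum>m\<in>(\<Union>n\<le>N. poisk_tuples k n). poisk_weight k lam m)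
      = (\<Sum>n\<le>N. \<Sum>m\<in>poisk_tuples k n. poisk_weight k lam m)"
    by (intro sum.UNION_disjoint finite_atMost ballI finite_poisk_tuples) blast
  then show ?thesis
    by (simp add: poisk_cdf_def poisk_pmf_eq_sum_weight sum_distrib_left)
qed

lemma exp_minus_mult_exp_power: "exp (- real k * lam) * exp lam ^ k = 1"
  by (simp add: exp_of_nat_mult[symmetric] exp_add[symmetric])

lemma poisk_cdf_le_one:
  assumes "lam \<ge> 0"
  shows "poisk_cdf k lam N \<le> 1"
proof -
  have "(\<Sum>m\<in>(\<Union>n\<le>N. poisk_tuples k n). poisk_weight k lam m)
      \<le> (\<Sum>m\<in>Pi_zero {1..k} (\<lambda>_. {..N}). poisk_weight k lam m)"
    using poisk_tuples_subset_Pi_zero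
    by (intro sum_mono2 finite_Pi_zero poisk_weight_nonneg assms) auto
  also have "\<dots> = (\<Sum>j\<le>N. lam ^ j / fact j) ^ k"
    by (rule sum_poisk_weight_Pi_zero) simp
  also have "\<dots> \<le> exp lam ^ k"
    using assms by (intro power_mono sum_exp_series_le_exp sum_nonneg) auto
  finally have "poisk_cdf k lam N \<le> exp (- real k * lam) * exp lam ^ k"
    unfolding poisk_cdf_eq_sum_weight by (rule mult_left_mono) simp
  then show ?thesis
    by (simp only: exp_minus_mult_exp_power)
qed

lemma poisk_cdf_exceeds:
  assumes "lam \<ge> 0" and "c < 1"
  shows "\<exists>N. c < poisk_cdf k lam N"
proof -
  have "(\<lambda>M. exp (- real k * lam) * (\<Sum>j<M. lam ^ j / fact j) ^ k) \<longlonglongrightarrow> exp (- real k * lam) * exp lam ^ k"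
    using exp_series_sums[of lam] unfolding sums_def by (intro tendsto_intros)
  then have "eventually (\<lambda>M. c < exp (- real k * lam) * (\<Sum>j<M. lam ^ j / fact j) ^ k) sequentially"
    using assms(2) unfolding exp_minus_mult_exp_power by (rule order_tendstoD(1))
  then obtain M where M: "c < exp (- real k * lam) * (\<Sum>j<M. lam ^ j / fact j) ^ k"
    by (auto simp: eventually_sequentially)
  have "(\<Sum>j<M. lam ^ j / fact j) ^ k = (\<Sum>m\<in>Pi_zero {1..k} (\<lambda>_. {..<M}). poisk_weight k lam m)"
    by (rule sum_poisk_weight_Pi_zero[symmetric]) simp
  also have "\<dots> \<le> (\<Sum>m\<in>(\<Union>n\<le>k*k*M. poisk_tuples k n). poisk_weight k lam m)"
    using Pi_zero_subset_poisk_tuples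
    by (intro sum_mono2 poisk_weight_nonneg assms) (auto simp: finite_poisk_tuples)
  finally have "exp (- real k * lam) * (\<Sum>j<M. lam ^ j / fact j) ^ k \<le> poisk_cdf k lam (k*k*M)"
    unfolding poisk_cdf_eq_sum_weight by (rule mult_left_mono) simp
  then show ?thesis
    using M by (intro exI[of _ "k*k*M"]) linarith
qed

lemma poisk_pmf_pos:
  assumes "lam > 0" and "k \<ge> 1"
  shows "poisk_pmf k lam n > 0"
proof -
  have "(\<lambda>i. if i = 1 then n else 0) \<in> poisk_tuples k n"
    using assms(2) by (simp add: poisk_tuples_def if_distrib sum.delta cong: if_cong)
  then have "(\<Sum>m\<in>poisk_tuples k n. poisk_weight k lam m) > 0"
    by (intro sum_pos2[OF finite_poisk_tuples]) (auto intro: poisk_weight_pos poisk_weight_nonneg less_imp_le assms(1))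
  then show ?thesis by (simp add: poisk_pmf_eq_sum_weight)
qed

theorem mainTheorem4:
  fixes k :: nat and lam :: real
  assumes "k \<ge> 2" and "lam > 0"
    and "poisk_median k lam = 0"
  shows "poisk_is_mode k lam 0 \<and> (\<forall>n. poisk_is_mode k lam n \<longrightarrow> n = 0)"
proof -
  \<comment> \<open>LEAST is unspecified unless some N qualifies\<close>
  obtain N where "1/2 < poisk_cdf k lam N"
    using poisk_cdf_exceeds[of lam "1/2" k] assms(2) by auto
  then have "1/2 \<le> poisk_cdf k lam (poisk_median k lam)"
    unfolding poisk_median_def by (rule LeastI[OF less_imp_le])
  then have "1/2 \<le> poisk_pmf k lam 0"
    using assms(3) by (simp add: poisk_cdf_def)
  then have less: "poisk_pmf k lam n < poisk_pmf k lam 0" if "n > 0" for n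
    using less_first_if_first_ge_half[OF poisk_pmf_pos poisk_cdf_le_one[unfolded poisk_cdf_def]]
      assms(1,2) that by simp
  show ?thesis
    unfolding poisk_is_mode_def
  proof (intro conjI allI impI)
    fix j show "poisk_pmf k lam j \<le> poisk_pmf k lam 0"
      using less[of j] by (cases "j = 0") auto
  next
    fix n assume "\<forall>j. poisk_pmf k lam j \<le> poisk_pmf k lam n"
    then have "poisk_pmf k lam 0 \<le> poisk_pmf k lam n" ..
    then show "n = 0"
      using less[of n] by (cases "n = 0") auto
  qed
qed

end
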